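(* Let $D=(0,1)\subseteq\mathbb{R}$ and let $\nu$ be a probability measure on $D$ with density $\rho:D\to[0,\infty)$. Assume that there are only $N$ points $x_1,\dots,x_N\in D$ satisfying $\rho(x_i)=0$, and that for each $i$, $$\underline{C_i}\,|x_i-x|^{k_i}\le\rho(x)\le\overline{C_i}\,|x_i-x|^{k_i}\quad\text{for all }x\in B_i,$$ where $B_i=(x_i-\Delta_i,x_i+\Delta_i)$ is a small neighborhood of $x_i$ and $\Delta_i,k_i,\overline{C_i},\underline{C_i}$ are positive numbers with $k_i\in\mathbb{Z}$. Let $X_1,\dots,X_n,\dots$ be i.i.d. random variables sampled from $\nu$ and let $\nu_n=\frac1n\sum_{i=1}^n\delta_{X_i}$. Then there exists a positive constant $C$, independent of $n$ (depending on $k_i,\underline{C_i}$ and the data of $\nu$), such that, except on a set with probability $O\big(\frac1{\log n}\big)$, $$W_\infty(\nu,\nu_n)\le C\max_i\Big(\frac{\log n}{n}\Big)^{\frac{1}{2(k_i+1)}}.$$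
   Context: For probability measures $\mu,\nu$ on $D$, the $\infty$-Wasserstein distance is $W_\infty(\mu,\nu)=\inf_{\pi\in\Pi(\mu,\nu)}\operatorname{ess\,sup}_{\pi}|x-y|$, where $\Pi(\mu,\nu)$ is the set of all probability measures on $D\times D$ with first marginal $\mu$ and second marginal $\nu$ (couplings), and the essential supremum is taken with respect to $\pi$. *)

theory Defs
  imports "HOL-Probability.Probability"
begin

definition couplings :: "real measure \<Rightarrow> real measure \<Rightarrow> (real \<times> real) measure set" where
  "couplings \<mu> \<nu> = {\<pi>. sets \<pi> = sets (borel \<Otimes>\<^sub>M borel) \<and> prob_space \<pi> \<and>
      distr \<pi> borel fst = \<mu> \<and> distr \<pi> borel snd = \<nu>}"

definition W_inf :: "real measure \<Rightarrow> real measure \<Rightarrow> ereal" where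
  "W_inf \<mu> \<nu> = (INF \<pi>\<in>couplings \<mu> \<nu>. esssup \<pi> (\<lambda>p. ereal (dist (fst p) (snd p))))"

definition empirical :: "(nat \<Rightarrow> 'a \<Rightarrow> real) \<Rightarrow> nat \<Rightarrow> 'a \<Rightarrow> real measure" where
  "empirical X n w = distr (measure_pmf (pmf_of_set {1..n})) borel (\<lambda>i. X i w)"

definition dens_measure :: "(real \<Rightarrow> real) \<Rightarrow> real measure" where
  "dens_measure \<rho> = density lborel (\<lambda>x. indicator {0<..<1} x * ennreal (\<rho> x))"

end

theory Submission
  imports Defs
begin

(* Couple nu and the empirical measure nu_n through their quantile functions: then
   W_inf(nu, nu_n) <= h as soon as each CDF is dominated by the other one shifted by h.
   Since rho vanishes to order at most K = max k_i, every interval of length L inside [0,1]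
   carries nu-mass at least c L^(K+1).  By Hoeffding's inequality and a union bound over a
   grid of mesh h/2, outside an event of probability O(1/(h n^2)) = O(1/log n) the empirical
   CDF is within eps = sqrt(log n / n) of the CDF of nu at all grid points.  For
   h ~ (log n / n)^(1/(2(K+1))) the mass of nu on any window of length h/2 exceeds eps,
   which absorbs the grid error and gives the shift comparison of the two CDFs. *)

section \<open>Comparing distributions on the unit interval through their CDFs\<close>

definition quantile :: "real measure \<Rightarrow> real \<Rightarrow> real" where
  "quantile \<mu> \<omega> = Inf {x. \<omega> \<le> cdf \<mu> x}"

definition quantile_coupling :: "real measure \<Rightarrow> real measure \<Rightarrow> (real \<times> real) measure" where
  "quantile_coupling \<mu> \<nu> = distr (restrict_space lborel {0<..<1}) (borel \<Otimes>\<^sub>M borel)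
     (\<lambda>\<omega>. (quantile \<mu> \<omega>, quantile \<nu> \<omega>))"

lemma quantile_le_iff:
  assumes "real_distribution \<mu>" "\<omega> \<in> {0<..<1}"
  shows "quantile \<mu> \<omega> \<le> x \<longleftrightarrow> \<omega> \<le> cdf \<mu> x"
proof -
  interpret cdf_distribution \<mu> using assms(1) by (simp add: cdf_distribution_def)
  show ?thesis using pseudoinverse[of \<omega> x] assms(2) by (simp add: quantile_def)
qed

lemma measurable_quantile [measurable]:
  assumes "real_distribution \<mu>"
  shows "quantile \<mu> \<in> borel_measurable (restrict_space lborel {0<..<1})"
proof -
  interpret cdf_distribution \<mu> using assms by (simp add: cdf_distribution_def)
  have "sets (restrict_space lborel {0<..<1::real}) = sets (restrict_space borel {0<..<1})"
    by (rule sets_restrict_space_cong) simp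
  then show ?thesis
    using measurable_CI unfolding quantile_def[abs_def] by (subst measurable_cong_sets[OF _ refl])
qed

lemma quantile_coupling_in_couplings:
  assumes \<mu>: "real_distribution \<mu>" and \<nu>: "real_distribution \<nu>"
  shows "quantile_coupling \<mu> \<nu> \<in> couplings \<mu> \<nu>"
  unfolding couplings_def
proof (intro CollectI conjI)
  interpret \<mu>: cdf_distribution \<mu> using \<mu> by (simp add: cdf_distribution_def)
  interpret \<nu>: cdf_distribution \<nu> using \<nu> by (simp add: cdf_distribution_def)
  interpret \<Omega>: prob_space "restrict_space lborel {0<..<1::real}"
    by (auto simp: emeasure_restrict_space space_restrict_space intro!: prob_spaceI)
  have I_meas: "(\<lambda>\<omega>. (quantile \<mu> \<omega>, quantile \<nu> \<omega>))
      \<in> measurable (restrict_space lborel {0<..<1}) (borel \<Otimes>\<^sub>M borel)"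
    using \<mu> \<nu> by measurable
  show "sets (quantile_coupling \<mu> \<nu>) = sets (borel \<Otimes>\<^sub>M borel)"
    by (simp add: quantile_coupling_def)
  show "prob_space (quantile_coupling \<mu> \<nu>)"
    unfolding quantile_coupling_def by (rule \<Omega>.prob_space_distr[OF I_meas])
  show "distr (quantile_coupling \<mu> \<nu>) borel fst = \<mu>"
    using \<mu>.distr_I_eq_M I_meas unfolding quantile_coupling_def quantile_def
    by (subst distr_distr) (auto simp: comp_def)
  show "distr (quantile_coupling \<mu> \<nu>) borel snd = \<nu>"
    using \<nu>.distr_I_eq_M I_meas unfolding quantile_coupling_def quantile_def
    by (subst distr_distr) (auto simp: comp_def)
qed

lemma AE_quantile_coupling_dist_le:
  assumes \<mu>: "real_distribution \<mu>" and \<nu>: "real_distribution \<nu>"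
    and \<mu>_le: "\<And>y. cdf \<mu> y \<le> cdf \<nu> (y + h)" and \<nu>_le: "\<And>y. cdf \<nu> y \<le> cdf \<mu> (y + h)"
  shows "AE p in quantile_coupling \<mu> \<nu>. dist (fst p) (snd p) \<le> h"
proof -
  have "\<bar>quantile \<mu> \<omega> - quantile \<nu> \<omega>\<bar> \<le> h" if "\<omega> \<in> {0<..<1}" for \<omega>
  proof -
    note \<mu>_iff = quantile_le_iff[OF \<mu> that] and \<nu>_iff = quantile_le_iff[OF \<nu> that]
    have "quantile \<nu> \<omega> \<le> quantile \<mu> \<omega> + h"
      using \<mu>_iff[of "quantile \<mu> \<omega>"] \<nu>_iff[of "quantile \<mu> \<omega> + h"] \<mu>_le[of "quantile \<mu> \<omega>"]
      by linarith
    moreover have "quantile \<mu> \<omega> \<le> quantile \<nu> \<omega> + h"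
      using \<nu>_iff[of "quantile \<nu> \<omega>"] \<mu>_iff[of "quantile \<nu> \<omega> + h"] \<nu>_le[of "quantile \<nu> \<omega>"]
      by linarith
    ultimately show ?thesis by linarith
  qed
  then have "AE \<omega> in restrict_space lborel {0<..<1}. dist (quantile \<mu> \<omega>) (quantile \<nu> \<omega>) \<le> h"
    by (intro AE_I2) (auto simp: space_restrict_space dist_real_def)
  moreover have "(\<lambda>\<omega>. (quantile \<mu> \<omega>, quantile \<nu> \<omega>))
      \<in> measurable (restrict_space lborel {0<..<1}) (borel \<Otimes>\<^sub>M borel)"
    using \<mu> \<nu> by measurable
  ultimately show ?thesis
    unfolding quantile_coupling_def by (subst AE_distr_iff) simp_all
qed

lemma W_inf_le_of_coupling:
  assumes "\<pi> \<in> couplings \<mu> \<nu>" "AE p in \<pi>. dist (fst p) (snd p) \<le> h"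
  shows "W_inf \<mu> \<nu> \<le> ereal h"
proof -
  have "W_inf \<mu> \<nu> \<le> esssup \<pi> (\<lambda>p. ereal (dist (fst p) (snd p)))"
    unfolding W_inf_def using assms(1) by (rule INF_lower)
  also have "\<dots> \<le> ereal h"
    using assms by (intro esssup_I) (auto simp: couplings_def)
  finally show ?thesis .
qed

lemma W_inf_le_of_cdf_shift:
  assumes "real_distribution \<mu>" "real_distribution \<nu>"
    and "\<And>y. cdf \<mu> y \<le> cdf \<nu> (y + h)" "\<And>y. cdf \<nu> y \<le> cdf \<mu> (y + h)"
  shows "W_inf \<mu> \<nu> \<le> ereal h"
  by (rule W_inf_le_of_coupling[OF quantile_coupling_in_couplings[OF assms(1,2)]
        AE_quantile_coupling_dist_le[OF assms]])

lemma grid_point_between: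
  fixes u \<delta> :: real and m :: nat
  assumes "0 \<le> u" "u + \<delta> \<le> 1" "0 < m" "1 / real m \<le> \<delta>"
  obtains j where "j \<le> m" "u \<le> real j / real m" "real j / real m \<le> u + \<delta>"
proof
  define j where "j = nat \<lceil>u * real m\<rceil>"
  have j: "real j = of_int \<lceil>u * real m\<rceil>"
    unfolding j_def using assms by simp
  have j_lower: "u * real m \<le> real j" and j_upper: "real j < u * real m + 1"
    unfolding j by linarith+
  have "0 < real m" using assms(3) by simp
  then have "u \<le> 1" using assms(2,4) divide_pos_pos[of 1 "real m"] by linarith
  then have "u * real m \<le> real m" using mult_right_mono[of u 1 "real m"] by simp
  then show "j \<le> m" using j_upper by linarith
  show "u \<le> real j / real m" using j_lower \<open>0 < real m\<close> by (simp add: field_simps)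
  have "real j / real m < u + 1 / real m" using j_upper \<open>0 < real m\<close> by (simp add: field_simps)
  then show "real j / real m \<le> u + \<delta>" using assms(4) by linarith
qed

context
  fixes \<mu> \<nu> :: "real measure" and m :: nat and h \<epsilon> :: real
  assumes \<mu>: "real_distribution \<mu>" and \<nu>: "real_distribution \<nu>"
    and \<mu>_below: "\<And>y. y < 0 \<Longrightarrow> cdf \<mu> y = 0" and \<mu>_above: "\<And>y. 1 \<le> y \<Longrightarrow> cdf \<mu> y = 1"
    and \<nu>_below: "\<And>y. y < 0 \<Longrightarrow> cdf \<nu> y = 0" and \<nu>_above: "\<And>y. 1 \<le> y \<Longrightarrow> cdf \<nu> y = 1"
    and close: "\<And>j. j \<le> m \<Longrightarrow> \<bar>cdf \<mu> (real j / real m) - cdf \<nu> (real j / real m)\<bar> < \<epsilon>"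
    and m: "0 < m" "1 / real m \<le> h / 2"
    and mass: "\<And>a. 0 \<le> a \<Longrightarrow> a + h / 2 \<le> 1 \<Longrightarrow> \<epsilon> \<le> measure \<nu> {a<..a + h / 2}"
begin

lemma grid_window_pos: "0 < h"
proof -
  have "0 < 1 / real m" using m(1) by simp
  then show ?thesis using m(2) by linarith
qed

lemma cdf_window_increment:
  assumes "0 \<le> a" "a + h / 2 \<le> 1"
  shows "cdf \<nu> a + \<epsilon> \<le> cdf \<nu> (a + h / 2)"
  using finite_borel_measure.cdf_diff_eq[OF real_distribution.finite_borel_measure_M[OF \<nu>],
      of a "a + h / 2"] mass[OF assms] grid_window_pos
  by simp

lemma cdf_\<mu>_le_shifted_cdf_\<nu>: "cdf \<mu> y \<le> cdf \<nu> (y + h)"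
proof -
  interpret \<mu>: real_distribution \<mu> by (fact \<mu>)
  interpret \<nu>: real_distribution \<nu> by (fact \<nu>)
  show ?thesis
  proof (cases "0 \<le> y \<and> y + h < 1")
    case True
    then have "y + h / 2 \<le> 1" using grid_window_pos by linarith
    then obtain j where j: "j \<le> m" "y \<le> real j / real m" "real j / real m \<le> y + h / 2"
      using grid_point_between[OF _ _ m] True by blast
    define z where "z = real j / real m"
    have "cdf \<mu> y \<le> cdf \<mu> z" using j by (simp add: z_def \<mu>.cdf_nondecreasing)
    also have "\<dots> < cdf \<nu> z + \<epsilon>" using close[OF j(1)] unfolding z_def by linarith
    also have "\<dots> \<le> cdf \<nu> (z + h / 2)" using cdf_window_increment[of z] True j by (simp add: z_def)
    also have "\<dots> \<le> cdf \<nu> (y + h)" using j by (intro \<nu>.cdf_nondecreasing) (simp add: z_def)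
    finally show ?thesis by simp
  next
    case False
    then consider "y < 0" | "1 \<le> y + h" by linarith
    then show ?thesis
      by cases (simp_all add: \<mu>_below \<nu>_above \<mu>.cdf_bounded_prob \<nu>.cdf_nonneg)
  qed
qed

lemma cdf_\<nu>_le_shifted_cdf_\<mu>: "cdf \<nu> y \<le> cdf \<mu> (y + h)"
proof -
  interpret \<mu>: real_distribution \<mu> by (fact \<mu>)
  interpret \<nu>: real_distribution \<nu> by (fact \<nu>)
  show ?thesis
  proof (cases "0 \<le> y \<and> y + h < 1")
    case True
    then have "0 \<le> y + h / 2" "y + h / 2 + h / 2 \<le> 1" using grid_window_pos by auto
    then obtain j where j: "j \<le> m" "y + h / 2 \<le> real j / real m" "real j / real m \<le> y + h / 2 + h / 2"
      by (rule grid_point_between[OF _ _ m])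
    define z where "z = real j / real m"
    have "cdf \<nu> y + \<epsilon> \<le> cdf \<nu> (y + h / 2)" using cdf_window_increment[of y] True grid_window_pos by simp
    also have "\<dots> \<le> cdf \<nu> z" using j by (intro \<nu>.cdf_nondecreasing) (simp add: z_def)
    also have "\<dots> < cdf \<mu> z + \<epsilon>" using close[OF j(1)] unfolding z_def by linarith
    also have "\<dots> \<le> cdf \<mu> (y + h) + \<epsilon>" using j by (simp add: z_def \<mu>.cdf_nondecreasing)
    finally show ?thesis by simp
  next
    case False
    then consider "y < 0" | "1 \<le> y + h" by linarith
    then show ?thesis
      by cases (simp_all add: \<nu>_below \<mu>_above \<nu>.cdf_bounded_prob \<mu>.cdf_nonneg)
  qed
qed

lemma W_inf_le_of_grid_close: "W_inf \<nu> \<mu> \<le> ereal h"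
  by (rule W_inf_le_of_cdf_shift[OF \<nu> \<mu> cdf_\<nu>_le_shifted_cdf_\<mu> cdf_\<mu>_le_shifted_cdf_\<nu>])

end

lemma cdf_eq_0_of_support:
  assumes "real_distribution \<nu>" "measure \<nu> {0..1} = 1" "y < 0"
  shows "cdf \<nu> y = 0"
proof -
  interpret real_distribution \<nu> by fact
  have "cdf \<nu> y \<le> measure \<nu> (- {0..1})"
    unfolding cdf_def using assms(3) by (intro finite_measure_mono) auto
  also have "\<dots> = 0" using assms(2) prob_compl[of "{0..1}"] by (simp add: Compl_eq_Diff_UNIV)
  finally show ?thesis using cdf_nonneg[of y] by linarith
qed

lemma cdf_eq_1_of_support:
  assumes "real_distribution \<nu>" "measure \<nu> {0..1} = 1" "1 \<le> y"
  shows "cdf \<nu> y = 1"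
proof -
  interpret real_distribution \<nu> by fact
  have "measure \<nu> {0..1} \<le> cdf \<nu> y"
    unfolding cdf_def using assms(3) by (intro finite_measure_mono) auto
  then show ?thesis using assms(2) cdf_bounded_prob[of y] by linarith
qed

section \<open>Empirical measures\<close>

lemma measure_empirical:
  assumes "1 \<le> n" "A \<in> sets borel"
  shows "measure (empirical X n w) A = card {i\<in>{1..n}. X i w \<in> A} / real n"
  using assms unfolding empirical_def
  by (subst measure_distr) (auto simp: measure_pmf_of_set Int_def vimage_def)

lemma cdf_empirical:
  assumes "1 \<le> n"
  shows "cdf (empirical X n w) y = (\<Sum>i=1..n. indicator {..y} (X i w)) / real n"
proof -
  have "(\<Sum>i=1..n. indicator {..y} (X i w)) = real (card {i\<in>{1..n}. X i w \<in> {..y}})"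
    by (simp add: indicator_def sum.If_cases Int_def)
  then show ?thesis using assms by (simp add: cdf_def measure_empirical)
qed

lemma real_distribution_empirical: "real_distribution (empirical X n w)"
  unfolding empirical_def
  by (rule prob_space.real_distribution_distr) (auto simp: measure_pmf.prob_space_axioms)

section \<open>Choice of the parameters\<close>

lemma sqrt_le_scaled_root_power:
  fixes c x :: real and K :: nat
  assumes "0 < c" "0 < x"
  shows "sqrt x \<le> c * (max 1 (1 / c) * x powr (1 / (2 * (real K + 1)))) ^ (K + 1)"
proof -
  have e: "real (K + 1) * (1 / (2 * (real K + 1))) = 1 / 2" by simp
  have "(x powr (1 / (2 * (real K + 1)))) ^ (K + 1) = sqrt x"
    using assms(2) by (subst powr_power) (auto simp only: e powr_half_sqrt)
  then have eq: "c * (max 1 (1 / c) * x powr (1 / (2 * (real K + 1)))) ^ (K + 1)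
      = c * max 1 (1 / c) ^ (K + 1) * sqrt x"
    by (simp add: power_mult_distrib)
  have "1 / c \<le> max 1 (1 / c) ^ (K + 1)"
    using power_increasing[of 1 "K + 1" "max 1 (1 / c)"] by simp
  then have "1 \<le> c * max 1 (1 / c) ^ (K + 1)"
    using assms(1) by (simp add: field_simps)
  then show ?thesis
    unfolding eq using mult_right_mono[of 1 _ "sqrt x"] assms(2) by (simp only: mult_1) simp
qed

lemma ln_ge_1: "3 \<le> n \<Longrightarrow> 1 \<le> ln (real n)"
  using exp_le by (simp add: ln_ge_iff)

lemma ln_div_bounds:
  assumes "3 \<le> n"
  shows "1 / real n \<le> ln (real n) / real n" "ln (real n) / real n \<le> 1"
  using ln_ge_1[OF assms] ln_bound[of "real n"] assms by (auto simp: divide_right_mono)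

lemma exp_neg_two_mult_sqrt_ln_div:
  assumes "1 \<le> n"
  shows "exp (- 2 * real n * (sqrt (ln (real n) / real n))\<^sup>2) = 1 / (real n)\<^sup>2"
proof -
  have "- 2 * real n * (sqrt (ln (real n) / real n))\<^sup>2 = - ln ((real n)\<^sup>2)"
    using assms by (simp add: ln_realpow)
  then show ?thesis
    using assms by (simp add: exp_minus inverse_eq_divide)
qed

lemma grid_size_bounds:
  fixes n :: nat and C h :: real
  assumes n: "3 \<le> n" and C: "0 < C" and h: "C / real n \<le> h"
  defines "m \<equiv> nat \<lceil>2 / h\<rceil>"
  shows "0 < m" "1 / real m \<le> h / 2"
    and "2 * real (Suc m) / (real n)\<^sup>2 \<le> (4 / C + 4) / ln (real n)"
proof -
  have "0 < C / real n" using C n by simp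
  then have "0 < h" using h by linarith
  have "real m = of_int \<lceil>2 / h\<rceil>"
    unfolding m_def using \<open>0 < h\<close> by simp
  then have m_bounds: "2 / h \<le> real m" "real m < 2 / h + 1"
    using ceiling_correct[of "2 / h"] by linarith+
  moreover have "0 < 2 / h" using \<open>0 < h\<close> by simp
  ultimately show "0 < m" by linarith
  have "1 / real m \<le> 1 / (2 / h)"
    using m_bounds(1) \<open>0 < 2 / h\<close> \<open>0 < m\<close> by (intro divide_left_mono) auto
  then show "1 / real m \<le> h / 2" by simp
  have "2 / h \<le> 2 * real n / C"
    using h C n \<open>0 < h\<close> by (simp add: field_simps)
  then have "real (Suc m) \<le> 2 * real n / C + 2"
    using m_bounds(2) by simp
  then have "2 * real (Suc m) / (real n)\<^sup>2 \<le> 2 * (2 * real n / C + 2) / (real n)\<^sup>2"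
    by (intro divide_right_mono) auto
  also have "\<dots> = (4 / C + 4 / real n) / real n"
    using n by (simp add: field_simps power2_eq_square)
  also have "\<dots> \<le> (4 / C + 4) / ln (real n)"
  proof (rule frac_le)
    show "4 / C + 4 / real n \<le> 4 / C + 4" using n by (simp add: field_simps)
    show "ln (real n) \<le> real n" using n by (intro ln_bound) simp
  qed (use C ln_ge_1[OF n] in auto)
  finally show "2 * real (Suc m) / (real n)\<^sup>2 \<le> (4 / C + 4) / ln (real n)" .
qed

section \<open>Independent samples\<close>

definition empirical_W_inf_rate ::
    "'a measure \<Rightarrow> (nat \<Rightarrow> 'a \<Rightarrow> real) \<Rightarrow> real measure \<Rightarrow> (nat \<Rightarrow> real) \<Rightarrow> bool" where
  "empirical_W_inf_rate M X \<nu> r \<longleftrightarrow> (\<exists>C>0. \<exists>B. \<exists>n0. \<forall>n\<ge>n0. \<exists>E\<in>sets M.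
     measure M E \<le> B / ln (real n) \<and>
     (\<forall>w\<in>space M - E. W_inf \<nu> (empirical X n w) \<le> ereal (C * r n)))"

lemma empirical_W_inf_rate_mono:
  assumes rate: "empirical_W_inf_rate M X \<nu> r" and le: "\<And>n. r n \<le> s n"
  shows "empirical_W_inf_rate M X \<nu> s"
proof -
  obtain C B n0 where "0 < C" and bound: "\<forall>n\<ge>n0. \<exists>E\<in>sets M. measure M E \<le> B / ln (real n) \<and>
      (\<forall>w\<in>space M - E. W_inf \<nu> (empirical X n w) \<le> ereal (C * r n))"
    using rate unfolding empirical_W_inf_rate_def by blast
  have "\<exists>E\<in>sets M. measure M E \<le> B / ln (real n) \<and>
      (\<forall>w\<in>space M - E. W_inf \<nu> (empirical X n w) \<le> ereal (C * s n))" if "n0 \<le> n" for n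
  proof -
    from bound that obtain E where E: "E \<in> sets M" "measure M E \<le> B / ln (real n)"
      "\<forall>w\<in>space M - E. W_inf \<nu> (empirical X n w) \<le> ereal (C * r n)"
      by auto
    have "ereal (C * r n) \<le> ereal (C * s n)"
      using le[of n] \<open>0 < C\<close> by (simp add: mult_left_mono)
    with E show ?thesis
      by (intro bexI[of _ E] conjI ballI) (auto intro: order_trans)
  qed
  with \<open>0 < C\<close> show ?thesis
    unfolding empirical_W_inf_rate_def by (intro exI[of _ C] conjI exI[of _ B] exI[of _ n0] allI impI) auto
qed

locale iid_real_sample = prob_space M for M :: "'a measure" +
  fixes X :: "nat \<Rightarrow> 'a \<Rightarrow> real" and \<nu> :: "real measure"
  assumes measurable_X [measurable]: "\<And>i. X i \<in> borel_measurable M"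
    and indep_X: "indep_vars (\<lambda>_. borel) X UNIV"
    and distr_X: "\<And>i. distr M borel (X i) = \<nu>"
begin

lemma real_distribution_\<nu>: "real_distribution \<nu>"
  using distr_X[of 0] by auto

lemma measurable_cdf_empirical [measurable]:
  assumes "1 \<le> n"
  shows "(\<lambda>w. cdf (empirical X n w) y) \<in> borel_measurable M"
  unfolding cdf_empirical[OF assms] by measurable

lemma prob_cdf_empirical_deviation:
  assumes "1 \<le> n" "0 \<le> \<epsilon>"
  shows "prob {w \<in> space M. \<epsilon> \<le> \<bar>cdf (empirical X n w) y - cdf \<nu> y\<bar>} \<le> 2 * exp (- 2 * real n * \<epsilon>\<^sup>2)"
proof -
  define Z where "Z = (\<lambda>i w. indicator {..y} (X i w) :: real)"
  have distr_Z: "distr M borel (Z i) = distr \<nu> borel (indicator {..y})" for i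
    unfolding Z_def distr_X[of i, symmetric] by (subst distr_distr) (auto simp: comp_def)
  interpret Z: Hoeffding_ineq_iid M "{1..n}" Z "Z 1" 0 1 "expectation (Z 1)"
  proof unfold_locales
    show "indep_vars (\<lambda>_. borel) Z {1..n}"
      unfolding Z_def by (rule indep_vars_compose2[OF indep_vars_subset[OF indep_X]]) auto
    show "distr M borel (Z i) = distr M borel (Z 1)" for i
      by (simp only: distr_Z)
    show "AE x in M. Z 1 x \<in> {0..1}"
      unfolding Z_def by (auto simp: indicator_def)
  qed (simp_all add: Z_def)
  have "expectation (Z 1) = integral\<^sup>L (distr M borel (X 1)) (indicator {..y})"
    unfolding Z_def by (subst integral_distr) auto
  also have "\<dots> = cdf \<nu> y"
    using real_distribution.space_eq_univ[OF real_distribution_\<nu>] by (simp add: distr_X cdf_def)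
  finally show ?thesis
    using Z.Hoeffding_ineq_abs_ge'[of \<epsilon>] assms by (simp add: cdf_empirical Z_def)
qed

lemma AE_samples_in:
  assumes "S \<in> sets borel" "measure \<nu> S = 1"
  shows "AE w in M. \<forall>i\<in>I. X i w \<in> S"
proof -
  interpret \<nu>: real_distribution \<nu> by (fact real_distribution_\<nu>)
  have "AE x in \<nu>. x \<in> S" using assms by (intro \<nu>.AE_prob_1) simp_all
  then have "AE w in M. X i w \<in> S" for i
    using assms(1) by (subst (asm) distr_X[of i, symmetric]) (simp add: AE_distr_iff)
  then show ?thesis by (simp add: AE_ball_countable)
qed

lemma prob_cdf_empirical_grid_deviation:
  assumes "1 \<le> n" "0 \<le> \<epsilon>"
  shows "prob (\<Union>j\<le>m. {w \<in> space M. \<epsilon> \<le> \<bar>cdf (empirical X n w) (real j / real m) - cdf \<nu> (real j / real m)\<bar>})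
    \<le> 2 * real (Suc m) * exp (- 2 * real n * \<epsilon>\<^sup>2)"
proof -
  have "prob (\<Union>j\<le>m. {w \<in> space M. \<epsilon> \<le> \<bar>cdf (empirical X n w) (real j / real m) - cdf \<nu> (real j / real m)\<bar>})
    \<le> (\<Sum>j\<le>m. prob {w \<in> space M. \<epsilon> \<le> \<bar>cdf (empirical X n w) (real j / real m) - cdf \<nu> (real j / real m)\<bar>})"
    using assms(1) by (intro finite_measure_subadditive_finite) auto
  also have "\<dots> \<le> (\<Sum>j\<le>m. 2 * exp (- 2 * real n * \<epsilon>\<^sup>2))"
    using assms by (intro sum_mono prob_cdf_empirical_deviation)
  finally show ?thesis by (simp add: algebra_simps)
qed

lemma W_inf_empirical_le_except_small_event:
  assumes support: "measure \<nu> {0..1} = 1" and n: "1 \<le> n"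
    and m: "0 < m" "1 / real m \<le> h / 2" and \<epsilon>: "0 \<le> \<epsilon>"
    and mass: "\<And>a. 0 \<le> a \<Longrightarrow> a + h / 2 \<le> 1 \<Longrightarrow> \<epsilon> \<le> measure \<nu> {a<..a + h / 2}"
  shows "\<exists>E\<in>events. prob E \<le> 2 * real (Suc m) * exp (- 2 * real n * \<epsilon>\<^sup>2) \<and>
           (\<forall>w\<in>space M - E. W_inf \<nu> (empirical X n w) \<le> ereal h)"
proof -
  obtain N where N: "{w\<in>space M. \<not> (\<forall>i\<in>{1..n}. X i w \<in> {0..1})} \<subseteq> N" "N \<in> events" "prob N = 0"
    using AE_samples_in[OF _ support, of "{1..n}"] by (auto elim!: AE_E simp: measure_def)
  define G where "G = (\<Union>j\<le>m. {w \<in> space M.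
    \<epsilon> \<le> \<bar>cdf (empirical X n w) (real j / real m) - cdf \<nu> (real j / real m)\<bar>})"
  have "G \<in> events"
    unfolding G_def using n by measurable
  then have "prob (N \<union> G) \<le> 2 * real (Suc m) * exp (- 2 * real n * \<epsilon>\<^sup>2)"
    using measure_Un_le[OF N(2)] N(3) prob_cdf_empirical_grid_deviation[OF n \<epsilon>, of m]
    unfolding G_def by fastforce
  moreover have "W_inf \<nu> (empirical X n w) \<le> ereal h" if w: "w \<in> space M - (N \<union> G)" for w
  proof (rule W_inf_le_of_grid_close[OF real_distribution_empirical real_distribution_\<nu> _ _ _ _ _ m mass])
    have "{i\<in>{1..n}. X i w \<in> {0..1}} = {1..n}"
      using w N(1) by auto
    then have "measure (empirical X n w) {0..1} = 1"
      using n by (simp add: measure_empirical)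
    then show "cdf (empirical X n w) y = 0" if "y < 0" for y
      using that by (intro cdf_eq_0_of_support real_distribution_empirical)
    show "cdf (empirical X n w) y = 1" if "1 \<le> y" for y
      using that \<open>measure (empirical X n w) {0..1} = 1\<close>
      by (intro cdf_eq_1_of_support real_distribution_empirical)
    show "cdf \<nu> y = 0" if "y < 0" for y
      using that support by (intro cdf_eq_0_of_support real_distribution_\<nu>)
    show "cdf \<nu> y = 1" if "1 \<le> y" for y
      using that support by (intro cdf_eq_1_of_support real_distribution_\<nu>)
    show "\<bar>cdf (empirical X n w) (real j / real m) - cdf \<nu> (real j / real m)\<bar> < \<epsilon>" if "j \<le> m" for j
      using w that by (force simp: G_def not_le)
  qed
  ultimately show ?thesis
    using N(2) \<open>G \<in> events\<close> by (intro bexI[of _ "N \<union> G"]) auto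
qed

lemma W_inf_empirical_le_at_rate:
  fixes c :: real and K n :: nat
  assumes support: "measure \<nu> {0..1} = 1" and c: "0 < c"
    and mass: "\<And>a L. 0 \<le> a \<Longrightarrow> 0 < L \<Longrightarrow> a + L \<le> 1 \<Longrightarrow> c * L ^ (K + 1) \<le> measure \<nu> {a<..a + L}"
    and n: "3 \<le> n"
  defines "C \<equiv> 2 * max 1 (1 / c)"
  shows "\<exists>E\<in>events. prob E \<le> (4 / C + 4) / ln (real n) \<and>
           (\<forall>w\<in>space M - E. W_inf \<nu> (empirical X n w)
              \<le> ereal (C * (ln (real n) / real n) powr (1 / (2 * (real K + 1)))))"
proof -
  \<comment> \<open>With \<open>\<epsilon> = sqrt x\<close>, \<open>x = ln n / n\<close>, each Hoeffding bound is \<open>2 / n\<^sup>2\<close>; C makes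
    \<open>c (h / 2) ^ (K + 1) \<ge> \<epsilon>\<close> for \<open>h = C x powr (1 / (2 (K + 1)))\<close>.\<close>
  have "0 < C" by (simp add: C_def)
  define x where "x = ln (real n) / real n"
  define h where "h = C * x powr (1 / (2 * (real K + 1)))"
  have x: "1 / real n \<le> x" "x \<le> 1"
    using ln_div_bounds[OF n] by (simp_all add: x_def)
  moreover have "0 < 1 / real n" using n by simp
  ultimately have "0 < x" by linarith
  have "x \<le> x powr (1 / (2 * (real K + 1)))"
    using powr_mono'[of "1 / (2 * (real K + 1))" 1 x] x \<open>0 < x\<close> by simp
  then have "C * (1 / real n) \<le> h"
    using x(1) \<open>0 < C\<close> unfolding h_def by (intro mult_left_mono) auto
  then have h: "C / real n \<le> h" by simp
  have mass_h: "sqrt x \<le> measure \<nu> {a<..a + h / 2}" if "0 \<le> a" "a + h / 2 \<le> 1" for a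
  proof -
    have "0 < h / 2" using \<open>0 < C\<close> \<open>0 < x\<close> by (simp add: h_def)
    have "sqrt x \<le> c * (h / 2) ^ (K + 1)"
      using sqrt_le_scaled_root_power[OF c \<open>0 < x\<close>, of K] by (simp add: h_def C_def)
    also have "\<dots> \<le> measure \<nu> {a<..a + h / 2}"
      using mass that \<open>0 < h / 2\<close> by blast
    finally show ?thesis .
  qed
  have "\<exists>E\<in>events. prob E \<le> 2 * real (Suc (nat \<lceil>2 / h\<rceil>)) * exp (- 2 * real n * (sqrt x)\<^sup>2) \<and>
      (\<forall>w\<in>space M - E. W_inf \<nu> (empirical X n w) \<le> ereal h)"
    using n \<open>0 < x\<close> by (intro W_inf_empirical_le_except_small_event[OF support _
        grid_size_bounds(1,2)[OF n \<open>0 < C\<close> h] _ mass_h]) auto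
  then obtain E where E: "E \<in> events"
    "prob E \<le> 2 * real (Suc (nat \<lceil>2 / h\<rceil>)) / (real n)\<^sup>2"
    "\<forall>w\<in>space M - E. W_inf \<nu> (empirical X n w) \<le> ereal h"
    using exp_neg_two_mult_sqrt_ln_div[of n] n unfolding x_def by auto
  then have "prob E \<le> (4 / C + 4) / ln (real n)"
    using grid_size_bounds(3)[OF n \<open>0 < C\<close> h] by linarith
  with E show ?thesis by (auto simp: h_def x_def)
qed

lemma W_inf_empirical_rate:
  fixes c :: real and K :: nat
  assumes "measure \<nu> {0..1} = 1" "0 < c"
    and "\<And>a L. 0 \<le> a \<Longrightarrow> 0 < L \<Longrightarrow> a + L \<le> 1 \<Longrightarrow> c * L ^ (K + 1) \<le> measure \<nu> {a<..a + L}"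
  shows "empirical_W_inf_rate M X \<nu> (\<lambda>n. (ln (real n) / real n) powr (1 / (2 * (real K + 1))))"
  unfolding empirical_W_inf_rate_def
  using W_inf_empirical_le_at_rate[OF assms] \<open>0 < c\<close>
  by (intro exI[of _ "2 * max 1 (1 / c)"] conjI exI[of _ "4 / (2 * max 1 (1 / c)) + 4"] exI[of _ 3]
      allI impI) auto

end

section \<open>Densities vanishing to finite order\<close>

lemma emeasure_dens_measure:
  assumes "\<rho> \<in> borel_measurable borel" "S \<in> sets borel"
  shows "emeasure (dens_measure \<rho>) S
    = (\<integral>\<^sup>+ x. indicator {0<..<1} x * ennreal (\<rho> x) * indicator S x \<partial>lborel)"
  unfolding dens_measure_def using assms
  by (subst emeasure_density) (auto simp: nn_integral_set_ennreal)

lemma emeasure_dens_measure_unit_interval: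
  assumes "\<rho> \<in> borel_measurable borel" "(\<integral>\<^sup>+ x \<in> {0<..<1}. ennreal (\<rho> x) \<partial>lborel) = 1"
    and "{0<..<1} \<subseteq> S" "S \<in> sets borel"
  shows "emeasure (dens_measure \<rho>) S = 1"
proof -
  have "indicator {0<..<1} x * indicator S x = (indicator {0<..<1} x :: ennreal)" for x
    using assms(3) by (auto simp: indicator_def)
  then show ?thesis
    using assms by (simp add: emeasure_dens_measure mult.commute mult.left_commute)
qed

lemma real_distribution_dens_measure:
  assumes "\<rho> \<in> borel_measurable borel" "(\<integral>\<^sup>+ x \<in> {0<..<1}. ennreal (\<rho> x) \<partial>lborel) = 1"
  shows "real_distribution (dens_measure \<rho>)"
  using emeasure_dens_measure_unit_interval[OF assms, of UNIV]
  by (auto simp: real_distribution_def real_distribution_axioms_def dens_measure_def intro: prob_spaceI)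

lemma measure_dens_measure_unit_interval:
  assumes "\<rho> \<in> borel_measurable borel" "(\<integral>\<^sup>+ x \<in> {0<..<1}. ennreal (\<rho> x) \<partial>lborel) = 1"
  shows "measure (dens_measure \<rho>) {0..1} = 1"
proof -
  have "{0<..<1::real} \<subseteq> {0..1}" by auto
  then show ?thesis
    using emeasure_dens_measure_unit_interval[OF assms, of "{0..1}"] by (simp add: measure_def)
qed

lemma emeasure_dens_measure_ge:
  assumes "\<rho> \<in> borel_measurable borel" "S \<in> sets borel" "T \<in> sets borel"
    and "T \<subseteq> S \<inter> {0<..<1}" "\<And>x. x \<in> T \<Longrightarrow> b \<le> \<rho> x"
  shows "ennreal b * emeasure lborel T \<le> emeasure (dens_measure \<rho>) S"
proof -
  have "ennreal b * emeasure lborel T = (\<integral>\<^sup>+ x. ennreal b * indicator T x \<partial>lborel)"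
    using assms(3) by (simp add: nn_integral_cmult_indicator)
  also have "\<dots> \<le> (\<integral>\<^sup>+ x. indicator {0<..<1} x * ennreal (\<rho> x) * indicator S x \<partial>lborel)"
  proof (intro nn_integral_mono)
    fix x
    show "ennreal b * indicator T x \<le> indicator {0<..<1} x * ennreal (\<rho> x) * indicator S x"
    proof (cases "x \<in> T")
      case True
      then have "x \<in> {0<..<1}" "x \<in> S" using assms(4) by auto
      then show ?thesis using True assms(5)[OF True] by (simp add: ennreal_leI)
    qed simp
  qed
  also have "\<dots> = emeasure (dens_measure \<rho>) S"
    using assms(1,2) by (simp add: emeasure_dens_measure)
  finally show ?thesis .
qed

lemma emeasure_interval_minus_small_intervals:
  fixes a L :: real and xs :: "nat \<Rightarrow> real" and N :: nat
  assumes "0 < L" "0 < N"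
  defines "r \<equiv> L / (4 * real N)"
  shows "ennreal (L / 2) \<le> emeasure lborel ({a<..<a + L} - (\<Union>i<N. {xs i - r<..<xs i + r}))"
proof -
  define U where "U = (\<Union>i<N. {xs i - r<..<xs i + r})"
  have "0 < r" using assms by (simp add: r_def)
  have "emeasure lborel U \<le> (\<Sum>i<N. emeasure lborel {xs i - r<..<xs i + r})"
    unfolding U_def by (intro emeasure_subadditive_finite) auto
  also have "\<dots> = ennreal (real N * (2 * r))"
    using \<open>0 < r\<close> by (simp add: emeasure_lborel_Ioo ennreal_of_nat_eq_real_of_nat ennreal_mult)
  also have "real N * (2 * r) = L / 2"
    using assms by (simp add: r_def field_simps)
  finally have U: "emeasure lborel U \<le> ennreal (L / 2)" .
  have U_sets: "U \<in> sets borel" by (simp add: U_def)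
  have "ennreal (L / 2) + ennreal (L / 2) = emeasure lborel {a<..<a + L}"
    using assms by (simp add: emeasure_lborel_Ioo flip: ennreal_plus)
  also have "\<dots> \<le> emeasure lborel (({a<..<a + L} - U) \<union> U)"
    using U_sets by (intro emeasure_mono) auto
  also have "\<dots> \<le> emeasure lborel ({a<..<a + L} - U) + emeasure lborel U"
    using U_sets by (intro emeasure_subadditive) auto
  also have "\<dots> \<le> ennreal (L / 2) + emeasure lborel ({a<..<a + L} - U)"
    using U by (subst add.commute) (intro add_left_mono)
  finally show ?thesis
    unfolding U_def ennreal_add_left_cancel_le by simp
qed

lemma dens_measure_interval_lower_bound:
  fixes \<rho> :: "real \<Rightarrow> real" and xs :: "nat \<Rightarrow> real" and N K :: nat and c a L :: real
  assumes \<rho>: "\<rho> \<in> borel_measurable borel" "(\<integral>\<^sup>+ x \<in> {0<..<1}. ennreal (\<rho> x) \<partial>lborel) = 1"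
    and "0 < N" "0 \<le> c"
    and \<rho>_lower: "\<And>x r. x \<in> {0<..<1} \<Longrightarrow> 0 < r \<Longrightarrow> r \<le> 1 \<Longrightarrow>
      (\<And>i. i < N \<Longrightarrow> r \<le> \<bar>x - xs i\<bar>) \<Longrightarrow> c * r ^ K \<le> \<rho> x"
    and a: "0 \<le> a" "0 < L" "a + L \<le> 1"
  shows "c / (2 * (4 * real N) ^ K) * L ^ (K + 1) \<le> measure (dens_measure \<rho>) {a<..a + L}"
proof -
  interpret real_distribution "dens_measure \<rho>"
    using real_distribution_dens_measure[OF \<rho>] .
  define r where "r = L / (4 * real N)"
  define T where "T = {a<..<a + L} - (\<Union>i<N. {xs i - r<..<xs i + r})"
  have "0 < r" "r \<le> 1"
    using a \<open>0 < N\<close> by (auto simp: r_def field_simps)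
  have \<rho>_T: "c * r ^ K \<le> \<rho> x" if "x \<in> T" for x
  proof (rule \<rho>_lower)
    show "x \<in> {0<..<1}" using that a by (auto simp: T_def)
    show "r \<le> \<bar>x - xs i\<bar>" if "i < N" for i
    proof -
      have "x \<notin> {xs i - r<..<xs i + r}" using \<open>x \<in> T\<close> that by (auto simp: T_def)
      then show ?thesis by (auto simp: abs_if)
    qed
  qed (use \<open>0 < r\<close> \<open>r \<le> 1\<close> in auto)
  have "ennreal (c * r ^ K * (L / 2)) = ennreal (c * r ^ K) * ennreal (L / 2)"
    using \<open>0 \<le> c\<close> \<open>0 < r\<close> a by (intro ennreal_mult) auto
  also have "\<dots> \<le> ennreal (c * r ^ K) * emeasure lborel T"
    unfolding T_def r_def using a \<open>0 < N\<close>
    by (intro mult_left_mono emeasure_interval_minus_small_intervals) auto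
  also have "\<dots> \<le> emeasure (dens_measure \<rho>) {a<..a + L}"
    using \<rho>(1) \<rho>_T a by (intro emeasure_dens_measure_ge) (auto simp: T_def)
  finally have "c * r ^ K * (L / 2) \<le> measure (dens_measure \<rho>) {a<..a + L}"
    by (simp add: emeasure_eq_measure)
  also have "c * r ^ K * (L / 2) = c / (2 * (4 * real N) ^ K) * L ^ (K + 1)"
    by (simp add: r_def field_simps power_divide)
  finally show ?thesis .
qed

lemma density_lower_bound_away_from_zeros:
  fixes \<rho> :: "real \<Rightarrow> real" and xs \<Delta> Cl :: "nat \<Rightarrow> real" and k :: "nat \<Rightarrow> int"
    and N K :: nat and c lam r x :: real
  assumes k: "\<And>i. i < N \<Longrightarrow> 0 < k i \<and> nat (k i) \<le> K"
    and c: "0 \<le> c" "c \<le> lam" "\<And>i. i < N \<Longrightarrow> c \<le> Cl i"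
    and near: "\<And>i x. i < N \<Longrightarrow> x \<in> {0<..<1} \<Longrightarrow> x \<in> {xs i - \<Delta> i <..< xs i + \<Delta> i} \<Longrightarrow>
      Cl i * \<bar>xs i - x\<bar> powi k i \<le> \<rho> x"
    and away: "\<And>x. x \<in> {0<..<1} \<Longrightarrow> (\<forall>i<N. x \<notin> {xs i - \<Delta> i <..< xs i + \<Delta> i}) \<Longrightarrow> lam \<le> \<rho> x"
    and x: "x \<in> {0<..<1}" and r: "0 < r" "r \<le> 1" "\<And>i. i < N \<Longrightarrow> r \<le> \<bar>x - xs i\<bar>"
  shows "c * r ^ K \<le> \<rho> x"
proof (cases "\<exists>i<N. x \<in> {xs i - \<Delta> i <..< xs i + \<Delta> i}")
  case True
  then obtain i where i: "i < N" "x \<in> {xs i - \<Delta> i <..< xs i + \<Delta> i}" by blast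
  have "r ^ K \<le> r ^ nat (k i)"
    using r k[OF i(1)] by (simp add: power_decreasing)
  also have "\<dots> \<le> \<bar>xs i - x\<bar> ^ nat (k i)"
    using r(1) r(3)[OF i(1)] by (intro power_mono) (auto simp: abs_minus_commute)
  also have "\<dots> = \<bar>xs i - x\<bar> powi k i"
    using k[OF i(1)] by (simp add: power_int_def)
  finally have "c * r ^ K \<le> Cl i * \<bar>xs i - x\<bar> powi k i"
    using c(1) c(3)[OF i(1)] r(1) by (intro mult_mono) auto
  then show ?thesis using near[OF i(1) x i(2)] by linarith
next
  case False
  have "c * r ^ K \<le> c"
    using c(1) r by (simp add: mult_left_le power_le_one)
  then show ?thesis using away[OF x] False c(2) by auto
qed

lemma dens_measure_interval_lower_bound_of_zero_orders:
  fixes \<rho> :: "real \<Rightarrow> real" and N :: nat and xs \<Delta> Cl :: "nat \<Rightarrow> real" and k :: "nat \<Rightarrow> int"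
    and lam :: real
  assumes \<rho>: "\<rho> \<in> borel_measurable borel" "(\<integral>\<^sup>+ x \<in> {0<..<1}. ennreal (\<rho> x) \<partial>lborel) = 1"
    and "1 \<le> N" and params: "\<And>i. i < N \<Longrightarrow> 0 < k i \<and> 0 < Cl i"
    and near: "\<And>i x. i < N \<Longrightarrow> x \<in> {0<..<1} \<Longrightarrow> x \<in> {xs i - \<Delta> i <..< xs i + \<Delta> i} \<Longrightarrow>
      Cl i * \<bar>xs i - x\<bar> powi k i \<le> \<rho> x"
    and "0 < lam"
    and away: "\<And>x. x \<in> {0<..<1} \<Longrightarrow> (\<forall>i<N. x \<notin> {xs i - \<Delta> i <..< xs i + \<Delta> i}) \<Longrightarrow> lam \<le> \<rho> x"
  obtains c where "0 < c" and "\<And>a L. 0 \<le> a \<Longrightarrow> 0 < L \<Longrightarrow> a + L \<le> 1 \<Longrightarrow>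
    c * L ^ (Max ((\<lambda>i. nat (k i)) ` {..<N}) + 1) \<le> measure (dens_measure \<rho>) {a<..a + L}"
proof
  define K where "K = Max ((\<lambda>i. nat (k i)) ` {..<N})"
  define c where "c = min lam (Min (Cl ` {..<N}))"
  have "{..<N} \<noteq> {}" using \<open>1 \<le> N\<close> by (simp add: lessThan_empty_iff)
  then have "0 < c" using \<open>0 < lam\<close> params by (auto simp: c_def Min_gr_iff)
  then show "0 < c / (2 * (4 * real N) ^ K)" using \<open>1 \<le> N\<close> by simp
  fix a L :: real assume a: "0 \<le> a" "0 < L" "a + L \<le> 1"
  show "c / (2 * (4 * real N) ^ K) * L ^ (K + 1) \<le> measure (dens_measure \<rho>) {a<..a + L}"
  proof (rule dens_measure_interval_lower_bound[OF \<rho> _ _ _ a])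
    show "c * r ^ K \<le> \<rho> x"
      if "x \<in> {0<..<1}" "0 < r" "r \<le> 1" "\<And>i. i < N \<Longrightarrow> r \<le> \<bar>x - xs i\<bar>" for x r
    proof (rule density_lower_bound_away_from_zeros[OF _ _ _ _ near away that])
      show "0 < k i \<and> nat (k i) \<le> K" if "i < N" for i
        using params[OF that] that unfolding K_def by (simp add: Max_ge)
      show "c \<le> Cl i" if "i < N" for i
        unfolding c_def using that by (simp add: Min_le min.coboundedI2)
    qed (use \<open>0 < c\<close> in \<open>auto simp: c_def\<close>)
  qed (use \<open>1 \<le> N\<close> \<open>0 < c\<close> in auto)
qed

theorem corollary1p3:
  fixes \<rho> :: "real \<Rightarrow> real" and N :: nat
    and xs \<Delta> Cl Cu :: "nat \<Rightarrow> real" and k :: "nat \<Rightarrow> int"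
    and lam :: real
    and M :: "'a measure" and X :: "nat \<Rightarrow> 'a \<Rightarrow> real"
  assumes rho_meas: "\<rho> \<in> borel_measurable borel"
    and rho_nonneg: "\<And>x. x \<in> {0<..<1} \<Longrightarrow> \<rho> x \<ge> 0"
    and rho_prob: "(\<integral>\<^sup>+ x \<in> {0<..<1}. ennreal (\<rho> x) \<partial>lborel) = 1"
    and N_pos: "N \<ge> 1"
    and xs_dist: "inj_on xs {..<N}"
    and zeros: "{x \<in> {0<..<1}. \<rho> x = 0} = xs ` {..<N}"
    and params: "\<And>i. i < N \<Longrightarrow> \<Delta> i > 0 \<and> k i > 0 \<and> Cl i > 0 \<and> Cu i > 0"
    and local_bounds: "\<And>i x. i < N \<Longrightarrow> x \<in> {0<..<1} \<Longrightarrow> x \<in> {xs i - \<Delta> i <..< xs i + \<Delta> i} \<Longrightarrow>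
          Cl i * \<bar>xs i - x\<bar> powi k i \<le> \<rho> x \<and> \<rho> x \<le> Cu i * \<bar>xs i - x\<bar> powi k i"
    and lower_away: "lam > 0"
    and lower_bound: "\<And>x. x \<in> {0<..<1} \<Longrightarrow> (\<forall>i<N. x \<notin> {xs i - \<Delta> i <..< xs i + \<Delta> i}) \<Longrightarrow> \<rho> x \<ge> lam"
    and M_prob: "prob_space M"
    and X_rv: "\<And>i. X i \<in> borel_measurable M"
    and X_indep: "prob_space.indep_vars M (\<lambda>_. borel) X UNIV"
    and X_distr: "\<And>i. distr M borel (X i) = dens_measure \<rho>"
  shows "\<exists>C>0. \<exists>K. \<exists>n0::nat. \<forall>n\<ge>n0. \<exists>E \<in> sets M.
           measure M E \<le> K / ln (real n) \<and>
           (\<forall>w \<in> space M - E. W_inf (dens_measure \<rho>) (empirical X n w)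
              \<le> ereal (C * (MAX i\<in>{..<N}. (ln (real n) / real n) powr (1 / (2 * (real_of_int (k i) + 1))))))"
proof -
  interpret prob_space M by (fact M_prob)
  interpret iid_real_sample M X "dens_measure \<rho>"
    using X_rv X_indep X_distr by unfold_locales auto
  define K where "K = Max ((\<lambda>i. nat (k i)) ` {..<N})"
  obtain c where "0 < c" and mass: "\<And>a L. 0 \<le> a \<Longrightarrow> 0 < L \<Longrightarrow> a + L \<le> 1 \<Longrightarrow>
      c * L ^ (K + 1) \<le> measure (dens_measure \<rho>) {a<..a + L}"
    unfolding K_def
    by (rule dens_measure_interval_lower_bound_of_zero_orders[OF rho_meas rho_prob N_pos _
          local_bounds[THEN conjunct1] lower_away lower_bound]) (use params in auto)
  have "{..<N} \<noteq> {}" using N_pos by (simp add: lessThan_empty_iff)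
  then have "K \<in> (\<lambda>i. nat (k i)) ` {..<N}"
    unfolding K_def by (intro Max_in) auto
  then obtain i0 where i0: "i0 < N" "real K = real_of_int (k i0)"
    using params by fastforce
  have rate_le_Max: "(ln (real n) / real n) powr (1 / (2 * (real K + 1)))
      \<le> (MAX i\<in>{..<N}. (ln (real n) / real n) powr (1 / (2 * (real_of_int (k i) + 1))))" for n :: nat
    unfolding i0(2) using i0(1) by (intro Max_ge) auto
  show ?thesis
    unfolding empirical_W_inf_rate_def[symmetric]
    by (rule empirical_W_inf_rate_mono[OF W_inf_empirical_rate[OF
          measure_dens_measure_unit_interval[OF rho_meas rho_prob] \<open>0 < c\<close> mass] rate_le_Max])
qed

end
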